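(* Let $g:\mathbb{R}\to\mathbb{R}$ be a function supported on $[-1,1]$, i.e. $g(x)=0$ for $x\notin[-1,1]$, and let $\theta^*\in\Theta_k$. Then there is $\theta'=(w',\mu',\tau')\in\Theta_k$ such that $\mu'_i\in[-1,1]$ for all $i\in[k]$ and \[ \|g-\mathcal{M}_{\theta'}\|_1\le 5\cdot\|g-\mathcal{M}_{\theta^*}\|_1. \]
   Context: $\Theta_k=\{(w,\mu,\tau): w\in\mathbb{R}^k, w_i\ge0,\sum_i w_i=1,\ \mu\in\mathbb{R}^k,\ \tau\in\mathbb{R}_{>0}^k\}$; for $\theta=(w,\mu,\tau)\in\Theta_k$, $\mathcal{M}_\theta(x)=\sum_{i=1}^k w_i\frac{\tau_i}{\sqrt{2\pi}}e^{-\tau_i^2(x-\mu_i)^2/2}$. $\|h\|_1=\int|h|$. *)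

theory Defs
  imports "HOL-Analysis.Analysis"
begin

text \<open>Parameter space Theta_k: weights, means, precisions, indexed by i < k.\<close>
definition Theta :: "nat \<Rightarrow> ((nat \<Rightarrow> real) \<times> (nat \<Rightarrow> real) \<times> (nat \<Rightarrow> real)) set" where
  "Theta k = {(w, mu, tau). (\<forall>i<k. 0 \<le> w i) \<and> (\<Sum>i<k. w i) = 1 \<and> (\<forall>i<k. 0 < tau i)}"

definition mixture :: "nat \<Rightarrow> (nat \<Rightarrow> real) \<times> (nat \<Rightarrow> real) \<times> (nat \<Rightarrow> real) \<Rightarrow> real \<Rightarrow> real" where
  "mixture k \<theta> x = (case \<theta> of (w, mu, tau) \<Rightarrow>
     (\<Sum>i<k. w i * (tau i / sqrt (2 * pi)) * exp (- ((tau i)\<^sup>2 * (x - mu i)\<^sup>2) / 2)))"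

definition L1norm :: "(real \<Rightarrow> real) \<Rightarrow> ennreal" where
  "L1norm h = (\<integral>\<^sup>+ x. ennreal \<bar>h x\<bar> \<partial>lborel)"

end

theory Submission
  imports Defs "HOL-Probability.Probability"
begin

text \<open>Move every mean lying outside \<open>[-1,1]\<close> to \<open>0\<close>, keeping weights and precisions.
  By the triangle inequality this changes the mixture by at most \<open>2W\<close> in \<open>L\<^sup>1\<close>, where \<open>W\<close>
  is the total weight of the moved components. Since \<open>g\<close> vanishes off \<open>[-1,1]\<close>, the error
  \<open>\<epsilon>\<close> of \<open>\<theta>\<^sup>*\<close> is at least the mass of the mixture outside \<open>[-1,1]\<close>, and every moved
  component puts half of its mass on a half-line disjoint from \<open>[-1,1]\<close>; so \<open>W \<le> 2\<epsilon>\<close> and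
  the new error is at most \<open>\<epsilon> + 4\<epsilon>\<close>.\<close>

lemma nn_integral_normal_density:
  "0 < s \<Longrightarrow> (\<integral>\<^sup>+x. ennreal (normal_density m s x) \<partial>lborel) = 1"
  by (subst nn_integral_eq_integral) auto

lemma nn_integral_normal_density_half_lines:
  fixes m s :: real
  assumes s: "0 < s"
  shows "(\<integral>\<^sup>+x. ennreal (normal_density m s x) * indicator {m..} x \<partial>lborel) = 1 / 2"
    and "(\<integral>\<^sup>+x. ennreal (normal_density m s x) * indicator {..m} x \<partial>lborel) = 1 / 2"
proof -
  let ?N = "\<lambda>x. ennreal (normal_density m s x)"
  have reflect: "(\<integral>\<^sup>+x. ?N x * indicator {..m} x \<partial>lborel) = (\<integral>\<^sup>+x. ?N x * indicator {m..} x \<partial>lborel)"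
  proof -
    have "(\<integral>\<^sup>+x. ?N x * indicator {m..} x \<partial>lborel)
        = ennreal \<bar>-1\<bar> * (\<integral>\<^sup>+x. ?N (2*m + (-1) * x) * indicator {m..} (2*m + (-1) * x) \<partial>lborel)"
      by (rule nn_integral_real_affine) auto
    also have "(\<lambda>x. ?N (2*m + (-1) * x) * indicator {m..} (2*m + (-1) * x)) = (\<lambda>x. ?N x * indicator {..m} x)"
      by (auto simp: fun_eq_iff indicator_def normal_density_def power2_commute)
    finally show ?thesis by simp
  qed
  have "1 = (\<integral>\<^sup>+x. ?N x \<partial>lborel)"
    using nn_integral_normal_density[OF s] by simp
  also have "\<dots> = (\<integral>\<^sup>+x. ?N x * indicator {m..} x + ?N x * indicator {..m} x \<partial>lborel)"
    by (intro nn_integral_cong_AE eventually_mono[OF AE_lborel_singleton[of m]])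
       (auto simp: indicator_def)
  also have "\<dots> = (\<integral>\<^sup>+x. ?N x * indicator {m..} x \<partial>lborel) * 2"
    by (subst nn_integral_add) (auto simp: reflect mult_2_right)
  finally have "(\<integral>\<^sup>+x. ?N x * indicator {m..} x \<partial>lborel) * 2 / 2 = 1 / 2"
    by simp
  then show "(\<integral>\<^sup>+x. ?N x * indicator {m..} x \<partial>lborel) = 1 / 2"
    by (subst (asm) ennreal_mult_divide_eq) auto
  then show "(\<integral>\<^sup>+x. ?N x * indicator {..m} x \<partial>lborel) = 1 / 2"
    by (simp add: reflect)
qed

lemma nn_integral_normal_density_outside_interval:
  fixes m s a b :: real
  assumes s: "0 < s" and m: "m \<notin> {a..b}"
  shows "1 / 2 \<le> (\<integral>\<^sup>+x. ennreal (normal_density m s x) * indicator (- {a..b}) x \<partial>lborel)"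
proof -
  obtain H where H: "H = {m..} \<or> H = {..m}" and "H \<subseteq> - {a..b}"
    using m by (cases "b < m") (auto intro: that[of "{m..}"] that[of "{..m}"])
  then have "(\<integral>\<^sup>+x. ennreal (normal_density m s x) * indicator H x \<partial>lborel)
      \<le> (\<integral>\<^sup>+x. ennreal (normal_density m s x) * indicator (- {a..b}) x \<partial>lborel)"
    by (intro nn_integral_mono) (auto simp: indicator_def)
  then show ?thesis
    using H nn_integral_normal_density_half_lines[OF s] by auto
qed

definition normal_mixture ::
    "'i set \<Rightarrow> ('i \<Rightarrow> real) \<Rightarrow> ('i \<Rightarrow> real) \<Rightarrow> ('i \<Rightarrow> real) \<Rightarrow> real \<Rightarrow> real" where
  "normal_mixture I w m s x = (\<Sum>i\<in>I. w i * normal_density (m i) (s i) x)"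

lemma borel_measurable_normal_mixture [measurable]:
  "normal_mixture I w m s \<in> borel_measurable borel"
  unfolding normal_mixture_def by measurable

lemma normal_mixture_nonneg:
  "(\<And>i. i \<in> I \<Longrightarrow> 0 \<le> w i) \<Longrightarrow> 0 \<le> normal_mixture I w m s x"
  unfolding normal_mixture_def by (auto intro!: sum_nonneg)

lemma mixture_eq_normal_mixture:
  assumes "\<And>i. i < k \<Longrightarrow> 0 < tau i"
  shows "mixture k (w, mu, tau) = normal_mixture {..<k} w mu (\<lambda>i. 1 / tau i)"
proof -
  have component: "w i * (tau i / sqrt (2 * pi)) * exp (- ((tau i)\<^sup>2 * (x - mu i)\<^sup>2) / 2)
      = w i * normal_density (mu i) (1 / tau i) x" if "i < k" for i x
    using assms[OF that] unfolding normal_density_def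
    by (simp add: real_sqrt_mult real_sqrt_divide power_divide field_simps)
  show ?thesis
    unfolding mixture_def normal_mixture_def prod.case
    by (intro ext sum.cong refl component) simp
qed

lemma L1norm_triangle:
  assumes [measurable]: "f \<in> borel_measurable borel" "g \<in> borel_measurable borel"
    "h \<in> borel_measurable borel"
  shows "L1norm (\<lambda>x. f x - h x) \<le> L1norm (\<lambda>x. f x - g x) + L1norm (\<lambda>x. g x - h x)"
proof -
  have "L1norm (\<lambda>x. f x - h x) \<le> (\<integral>\<^sup>+x. ennreal \<bar>f x - g x\<bar> + ennreal \<bar>g x - h x\<bar> \<partial>lborel)"
    unfolding L1norm_def
  proof (intro nn_integral_mono)
    fix x
    have "ennreal \<bar>f x - h x\<bar> \<le> ennreal (\<bar>f x - g x\<bar> + \<bar>g x - h x\<bar>)"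
      by (intro ennreal_leI) linarith
    then show "ennreal \<bar>f x - h x\<bar> \<le> ennreal \<bar>f x - g x\<bar> + ennreal \<bar>g x - h x\<bar>"
      by (simp add: ennreal_plus)
  qed
  also have "\<dots> = L1norm (\<lambda>x. f x - g x) + L1norm (\<lambda>x. g x - h x)"
    unfolding L1norm_def by (rule nn_integral_add) auto
  finally show ?thesis .
qed

lemma L1norm_sum_le:
  assumes "finite I" and meas: "\<And>i. i \<in> I \<Longrightarrow> f i \<in> borel_measurable borel"
  shows "L1norm (\<lambda>x. \<Sum>i\<in>I. f i x) \<le> (\<Sum>i\<in>I. L1norm (f i))"
proof -
  have "L1norm (\<lambda>x. \<Sum>i\<in>I. f i x) \<le> (\<integral>\<^sup>+x. (\<Sum>i\<in>I. ennreal \<bar>f i x\<bar>) \<partial>lborel)"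
    unfolding L1norm_def by (intro nn_integral_mono) (simp add: sum_ennreal ennreal_leI sum_abs)
  also have "\<dots> = (\<Sum>i\<in>I. L1norm (f i))"
    unfolding L1norm_def using meas by (intro nn_integral_sum) auto
  finally show ?thesis .
qed

lemma L1norm_cmult:
  "f \<in> borel_measurable borel \<Longrightarrow> L1norm (\<lambda>x. c * f x) = ennreal \<bar>c\<bar> * L1norm f"
  unfolding L1norm_def by (simp add: abs_mult ennreal_mult nn_integral_cmult)

lemma L1norm_normal_density_diff_le:
  assumes "0 < s" "0 < s'"
  shows "L1norm (\<lambda>x. normal_density m s x - normal_density m' s' x) \<le> 2"
proof -
  have "L1norm (\<lambda>x. normal_density m s x - normal_density m' s' x)
      \<le> (\<integral>\<^sup>+x. ennreal (normal_density m s x) + ennreal (normal_density m' s' x) \<partial>lborel)"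
    unfolding L1norm_def
  proof (intro nn_integral_mono)
    fix x
    have "\<bar>normal_density m s x - normal_density m' s' x\<bar>
        \<le> normal_density m s x + normal_density m' s' x"
      using normal_density_nonneg[of m s x] normal_density_nonneg[of m' s' x] by linarith
    then show "ennreal \<bar>normal_density m s x - normal_density m' s' x\<bar>
        \<le> ennreal (normal_density m s x) + ennreal (normal_density m' s' x)"
      by (simp add: ennreal_plus[symmetric] ennreal_leI del: ennreal_plus)
  qed
  also have "\<dots> = 2"
    using assms by (simp add: nn_integral_add nn_integral_normal_density one_add_one)
  finally show ?thesis .
qed

lemma L1norm_normal_mixture_move_means:
  assumes I: "finite I" and w: "\<And>i. i \<in> I \<Longrightarrow> 0 \<le> w i" and s: "\<And>i. i \<in> I \<Longrightarrow> 0 < s i"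
    and [measurable]: "g \<in> borel_measurable borel"
  shows "L1norm (\<lambda>x. g x - normal_mixture I w m' s x)
    \<le> L1norm (\<lambda>x. g x - normal_mixture I w m s x) + 2 * ennreal (\<Sum>i\<in>{i\<in>I. m i \<noteq> m' i}. w i)"
proof -
  let ?D = "{i\<in>I. m i \<noteq> m' i}"
  let ?d = "\<lambda>i x. normal_density (m i) (s i) x - normal_density (m' i) (s i) x"
  have diff: "normal_mixture I w m s x - normal_mixture I w m' s x = (\<Sum>i\<in>?D. w i * ?d i x)" for x
  proof -
    have "normal_mixture I w m s x - normal_mixture I w m' s x = (\<Sum>i\<in>I. w i * ?d i x)"
      by (simp add: normal_mixture_def sum_subtractf algebra_simps)
    also have "\<dots> = (\<Sum>i\<in>?D. w i * ?d i x)"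
      using I by (intro sum.mono_neutral_right) auto
    finally show ?thesis .
  qed
  have "L1norm (\<lambda>x. normal_mixture I w m s x - normal_mixture I w m' s x)
      \<le> (\<Sum>i\<in>?D. L1norm (\<lambda>x. w i * ?d i x))"
    unfolding diff using I by (intro L1norm_sum_le) auto
  also have "\<dots> = (\<Sum>i\<in>?D. ennreal (w i) * L1norm (?d i))"
    using w by (intro sum.cong refl) (simp add: L1norm_cmult)
  also have "\<dots> \<le> (\<Sum>i\<in>?D. ennreal (w i) * 2)"
    using s by (intro sum_mono mult_left_mono L1norm_normal_density_diff_le) auto
  also have "\<dots> = 2 * (\<Sum>i\<in>?D. ennreal (w i))"
    by (simp add: sum_distrib_left mult.commute)
  also have "\<dots> = 2 * ennreal (\<Sum>i\<in>?D. w i)"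
    using w by (subst sum_ennreal) auto
  finally have "L1norm (\<lambda>x. normal_mixture I w m s x - normal_mixture I w m' s x)
      \<le> 2 * ennreal (\<Sum>i\<in>?D. w i)" .
  then show ?thesis
    using L1norm_triangle[of g "normal_mixture I w m s" "normal_mixture I w m' s"]
    by (auto intro: order_trans add_left_mono)
qed

lemma nn_integral_outside_le_L1norm:
  assumes "\<And>x. x \<notin> A \<Longrightarrow> g x = 0" and "\<And>x. 0 \<le> f x"
  shows "(\<integral>\<^sup>+x. ennreal (f x) * indicator (- A) x \<partial>lborel) \<le> L1norm (\<lambda>x. g x - f x)"
  unfolding L1norm_def using assms by (intro nn_integral_mono) (auto simp: indicator_def)

lemma normal_mixture_weight_outside_le_L1norm:
  assumes I: "finite I" and w: "\<And>i. i \<in> I \<Longrightarrow> 0 \<le> w i" and s: "\<And>i. i \<in> I \<Longrightarrow> 0 < s i"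
    and g: "\<And>x. x \<notin> {a..b} \<Longrightarrow> g x = 0"
  shows "ennreal (\<Sum>i\<in>{i\<in>I. m i \<notin> {a..b}}. w i) \<le> 2 * L1norm (\<lambda>x. g x - normal_mixture I w m s x)"
proof -
  let ?B = "{i\<in>I. m i \<notin> {a..b}}"
  let ?N = "\<lambda>i x. ennreal (normal_density (m i) (s i) x) * indicator (- {a..b}) x"
  have pointwise: "(\<Sum>i\<in>?B. ennreal (w i) * ?N i x)
      \<le> ennreal (normal_mixture I w m s x) * indicator (- {a..b}) x" for x
  proof -
    have "(\<Sum>i\<in>?B. ennreal (w i) * ?N i x)
        = (\<Sum>i\<in>?B. ennreal (w i * normal_density (m i) (s i) x)) * indicator (- {a..b}) x"
      using w by (simp add: ennreal_mult sum_distrib_right mult.assoc)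
    also have "\<dots> = ennreal (\<Sum>i\<in>?B. w i * normal_density (m i) (s i) x) * indicator (- {a..b}) x"
      using w by (subst sum_ennreal) auto
    also have "\<dots> \<le> ennreal (normal_mixture I w m s x) * indicator (- {a..b}) x"
      unfolding normal_mixture_def using I w
      by (intro mult_right_mono ennreal_leI sum_mono2) auto
    finally show ?thesis .
  qed
  have "(\<Sum>i\<in>?B. ennreal (w i) * (1 / 2)) \<le> (\<Sum>i\<in>?B. ennreal (w i) * (\<integral>\<^sup>+x. ?N i x \<partial>lborel))"
    using s by (intro sum_mono mult_left_mono nn_integral_normal_density_outside_interval) auto
  also have "\<dots> = (\<integral>\<^sup>+x. (\<Sum>i\<in>?B. ennreal (w i) * ?N i x) \<partial>lborel)"
    using I by (subst nn_integral_sum) (auto simp: nn_integral_cmult)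
  also have "\<dots> \<le> (\<integral>\<^sup>+x. ennreal (normal_mixture I w m s x) * indicator (- {a..b}) x \<partial>lborel)"
    by (intro nn_integral_mono pointwise)
  also have "\<dots> \<le> L1norm (\<lambda>x. g x - normal_mixture I w m s x)"
    using g w by (intro nn_integral_outside_le_L1norm normal_mixture_nonneg)
  finally have half: "ennreal (\<Sum>i\<in>?B. w i) / 2 \<le> L1norm (\<lambda>x. g x - normal_mixture I w m s x)"
    using w by (subst sum_ennreal[symmetric]) (auto simp: divide_ennreal_def sum_distrib_right)
  have double_half: "x = 2 * (x / 2)" for x :: ennreal
    by (simp add: ennreal_times_divide ennreal_mult_divide_eq mult.commute)
  have "ennreal (\<Sum>i\<in>?B. w i) = 2 * (ennreal (\<Sum>i\<in>?B. w i) / 2)"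
    by (rule double_half)
  also have "\<dots> \<le> 2 * L1norm (\<lambda>x. g x - normal_mixture I w m s x)"
    using half by (rule mult_left_mono) simp
  finally show ?thesis .
qed

theorem lemma17:
  fixes g :: "real \<Rightarrow> real" and k :: nat
    and \<theta>s :: "(nat \<Rightarrow> real) \<times> (nat \<Rightarrow> real) \<times> (nat \<Rightarrow> real)"
  assumes g_meas: "g \<in> borel_measurable lborel"
    and g_supp: "\<And>x. x \<notin> {-1..1} \<Longrightarrow> g x = 0"
    and \<theta>s_in: "\<theta>s \<in> Theta k"
  shows "\<exists>w' mu' tau'. (w', mu', tau') \<in> Theta k \<and> (\<forall>i<k. mu' i \<in> {-1..1}) \<and>
           L1norm (\<lambda>x. g x - mixture k (w', mu', tau') x)
             \<le> 5 * L1norm (\<lambda>x. g x - mixture k \<theta>s x)"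
proof -
  obtain w mu tau where \<theta>s: "\<theta>s = (w, mu, tau)" by (cases \<theta>s)
  have w: "\<And>i. i < k \<Longrightarrow> 0 \<le> w i" and tau: "\<And>i. i < k \<Longrightarrow> 0 < tau i"
    using \<theta>s_in by (auto simp: \<theta>s Theta_def)
  define mu' where "mu' i = (if mu i \<in> {-1..1} then mu i else 0)" for i
  define \<epsilon> where "\<epsilon> = L1norm (\<lambda>x. g x - mixture k \<theta>s x)"
  let ?W = "\<Sum>i\<in>{i\<in>{..<k}. mu i \<notin> {-1..1}}. w i"
  have moved: "{i\<in>{..<k}. mu i \<noteq> mu' i} = {i\<in>{..<k}. mu i \<notin> {-1..1}}"
    by (auto simp: mu'_def)
  have mix: "mixture k (w, m, tau) = normal_mixture {..<k} w m (\<lambda>i. 1 / tau i)" for m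
    using tau by (rule mixture_eq_normal_mixture)
  have "L1norm (\<lambda>x. g x - mixture k (w, mu', tau) x) \<le> \<epsilon> + 2 * ennreal ?W"
    using L1norm_normal_mixture_move_means[of "{..<k}" w "\<lambda>i. 1 / tau i" g mu' mu,
        unfolded moved] g_meas w tau
    by (simp add: \<epsilon>_def \<theta>s mix)
  also have "\<dots> \<le> \<epsilon> + 2 * (2 * \<epsilon>)"
    using normal_mixture_weight_outside_le_L1norm[of "{..<k}" w "\<lambda>i. 1 / tau i" "-1" 1 g mu]
      g_supp w tau
    by (intro add_left_mono mult_left_mono) (auto simp: \<epsilon>_def \<theta>s mix)
  also have "\<dots> = 5 * \<epsilon>"
  proof -
    have "(5::ennreal) = 1 + 2 * 2" by simp
    then show ?thesis by (simp only: distrib_right mult_1 mult.assoc)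
  qed
  finally have "L1norm (\<lambda>x. g x - mixture k (w, mu', tau) x) \<le> 5 * \<epsilon>" .
  moreover have "(w, mu', tau) \<in> Theta k"
    using \<theta>s_in by (simp add: \<theta>s Theta_def)
  ultimately show ?thesis
    unfolding \<epsilon>_def by (intro exI[of _ w] exI[of _ mu'] exI[of _ tau]) (auto simp: mu'_def)
qed

end
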